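(* Let $A$ take values $a_1,\ldots,a_{N_A}$ and $B$ take values $b_1,\ldots,b_{N_B}$. Let $P_K$ be a non-product joint probability distribution on $(A,B)$ obeying the Kolmogorov axioms of probability (so $P_K(a_i,b_j)\ge 0$, $\sum_{i,j}P_K(a_i,b_j)=1$), with all marginals nonzero and with conditional matrix $\mathbf{P}_K(A|B)$ (entries $P_K(a_i,b_j)/P_K(b_j)$) invertible. Then there exists a generalized two-variable probability assignment $P_I$ (as defined in the context) satisfying Axiom 5 such that $P_K(a_i,b_j)=P_I(a_i,b_j)$ for all $i$ and $j$.
   Context: Generalized two-variable probability assignment: a pair of real-valued (not necessarily nonnegative) arrays $P(a_i,b_j)$ (probability relative to the ordering in which $B$ precedes $A$) and $P(b_j,a_i)$ (relative to the ordering in which $A$ precedes $B$) with $\sum_{i,j}P(a_i,b_j)=1=\sum_{i,j}P(b_j,a_i)$ and ordering-independent marginals: $P(a_i)=\sum_j P(a_i,b_j)=\sum_j P(b_j,a_i)$, $P(b_j)=\sum_i P(a_i,b_j)=\sum_i P(b_j,a_i)$. Conditionals: $P(a_i|b_j)=P(a_i,b_j)/P(b_j)$, $P(b_j|a_i)=P(b_j,a_i)/P(a_i)$; $\mathbf{P}(A|B)$ is the $N_A\times N_B$ matrix of $P(a_i|b_j)$ and $\mathbf{P}(B|A)$ the $N_B\times N_A$ matrix of $P(b_j|a_i)$; $\vec P(A),\vec P(B)$ are the marginal vectors. Axiom 5 (inference axiom): $\mathbf{P}(A|B)$ and $\mathbf{P}(B|A)$ may be specified independently of $\vec P(B)$ and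 $\vec P(A)$, i.e. the same conditional matrices are consistent with $\vec P(A)=\mathbf{P}(A|B)\vec P(B)$ and $\vec P(B)=\mathbf{P}(B|A)\vec P(A)$ for every choice of the marginals. A distribution is a product distribution if $P(a_i,b_j)=P(a_i)P(b_j)$ for all $i,j$; otherwise non-product. *)

theory Defs
  imports "HOL-Analysis.Analysis"
begin

text \<open>Values of A are indexed by a finite type 'a (N_A = CARD('a)),
values of B by a finite type 'b (N_B = CARD('b)).
A joint array P(a_i,b_j) is a function 'a => 'b => real;
the array P(b_j,a_i) (other ordering) is a function 'b => 'a => real.\<close>

definition margA :: "('a::finite \<Rightarrow> 'b::finite \<Rightarrow> real) \<Rightarrow> 'a \<Rightarrow> real" where
  "margA P i = (\<Sum>j\<in>UNIV. P i j)"

definition margB :: "('a::finite \<Rightarrow> 'b::finite \<Rightarrow> real) \<Rightarrow> 'b \<Rightarrow> real" where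
  "margB P j = (\<Sum>i\<in>UNIV. P i j)"

definition gen_assignment ::
  "('a::finite \<Rightarrow> 'b::finite \<Rightarrow> real) \<Rightarrow> ('b \<Rightarrow> 'a \<Rightarrow> real) \<Rightarrow> bool" where
  "gen_assignment PAB PBA \<longleftrightarrow>
     (\<Sum>i\<in>UNIV. \<Sum>j\<in>UNIV. PAB i j) = 1 \<and>
     (\<Sum>i\<in>UNIV. \<Sum>j\<in>UNIV. PBA j i) = 1 \<and>
     (\<forall>i. (\<Sum>j\<in>UNIV. PAB i j) = (\<Sum>j\<in>UNIV. PBA j i)) \<and>
     (\<forall>j. (\<Sum>i\<in>UNIV. PAB i j) = (\<Sum>i\<in>UNIV. PBA j i))"

definition condAB :: "('a::finite \<Rightarrow> 'b::finite \<Rightarrow> real) \<Rightarrow> real^'b^'a" where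
  "condAB PAB = (\<chi> i j. PAB i j / margB PAB j)"

definition condBA :: "('b::finite \<Rightarrow> 'a::finite \<Rightarrow> real) \<Rightarrow> real^'a^'b" where
  "condBA PBA = (\<chi> j i. PBA j i / (\<Sum>j'\<in>UNIV. PBA j' i))"

text \<open>Axiom 5: the same conditional matrices are consistent with
P(A) = P(A|B) P(B) and P(B) = P(B|A) P(A) for every choice of the marginals
(every real vector summing to 1).\<close>
definition axiom5 ::
  "('a::finite \<Rightarrow> 'b::finite \<Rightarrow> real) \<Rightarrow> ('b \<Rightarrow> 'a \<Rightarrow> real) \<Rightarrow> bool" where
  "axiom5 PAB PBA \<longleftrightarrow>
     (\<forall>pB :: real^'b. (\<Sum>j\<in>UNIV. pB $ j) = 1 \<longrightarrow>
         condBA PBA *v (condAB PAB *v pB) = pB) \<and>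
     (\<forall>pA :: real^'a. (\<Sum>i\<in>UNIV. pA $ i) = 1 \<longrightarrow>
         condAB PAB *v (condBA PBA *v pA) = pA)"

definition kolmogorov :: "('a::finite \<Rightarrow> 'b::finite \<Rightarrow> real) \<Rightarrow> bool" where
  "kolmogorov P \<longleftrightarrow> (\<forall>i j. P i j \<ge> 0) \<and> (\<Sum>i\<in>UNIV. \<Sum>j\<in>UNIV. P i j) = 1"

definition product_dist :: "('a::finite \<Rightarrow> 'b::finite \<Rightarrow> real) \<Rightarrow> bool" where
  "product_dist P \<longleftrightarrow> (\<forall>i j. P i j = margA P i * margB P j)"

end

theory Submission
  imports Defs
begin

text \<open>The conditional matrix M = P(A|B) is column-stochastic and maps the marginal of B to
the marginal of A. Its inverse is again column-stochastic (as a left inverse of a matrix whose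
columns sum to 1) and maps the marginal of A back to that of B. Taking P(B|A) := M\<inverse>, i.e.
P(b_j,a_i) := (M\<inverse>)_ji P(a_i), therefore gives a real-valued assignment with the right
marginals, and Axiom 5 holds because the two conditional matrices are mutually inverse.\<close>

lemma invertible_matrix_inv:
  fixes M :: "'a::semiring_1^'n^'m"
  assumes "invertible M"
  shows "M ** matrix_inv M = mat 1" and "matrix_inv M ** M = mat 1"
proof -
  have "\<exists>N. M ** N = mat 1 \<and> N ** M = mat 1"
    using assms unfolding invertible_def .
  then have "M ** matrix_inv M = mat 1 \<and> matrix_inv M ** M = mat 1"
    unfolding matrix_inv_def by (rule someI_ex)
  then show "M ** matrix_inv M = mat 1" "matrix_inv M ** M = mat 1" by auto
qed

lemma column_sums_right_inverse:
  fixes M :: "'a::comm_ring_1^'n::finite^'m::finite" and N :: "'a^'m^'n"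
  assumes columns: "\<And>j. (\<Sum>i\<in>UNIV. M $ i $ j) = 1"
    and inverse: "M ** N = mat 1"
  shows "(\<Sum>j\<in>UNIV. N $ j $ k) = 1"
proof -
  have "(\<Sum>j\<in>UNIV. N $ j $ k) = (\<Sum>j\<in>UNIV. (\<Sum>i\<in>UNIV. M $ i $ j) * N $ j $ k)"
    by (simp add: columns)
  also have "\<dots> = (\<Sum>j\<in>UNIV. \<Sum>i\<in>UNIV. M $ i $ j * N $ j $ k)"
    by (simp add: sum_distrib_right)
  also have "\<dots> = (\<Sum>i\<in>UNIV. \<Sum>j\<in>UNIV. M $ i $ j * N $ j $ k)"
    by (rule sum.swap)
  also have "\<dots> = (\<Sum>i\<in>UNIV. (M ** N) $ i $ k)"
    by (simp add: matrix_matrix_mult_def)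
  also have "\<dots> = 1"
    by (simp add: inverse mat_def)
  finally show ?thesis .
qed

lemma condAB_nth: "condAB P $ i $ j = P i j / margB P j"
  by (simp add: condAB_def)

lemma column_sum_condAB:
  assumes "margB P j \<noteq> 0"
  shows "(\<Sum>i\<in>UNIV. condAB P $ i $ j) = 1"
  using assms by (simp add: condAB_nth margB_def flip: sum_divide_distrib)

lemma condAB_mult_margB:
  assumes "\<forall>j. margB P j \<noteq> 0"
  shows "condAB P *v (\<chi> j. margB P j) = (\<chi> i. margA P i)"
  using assms by (simp add: vec_eq_iff matrix_vector_mult_def condAB_nth margA_def)

definition reversed_joint :: "('a::finite \<Rightarrow> 'b::finite \<Rightarrow> real) \<Rightarrow> 'b \<Rightarrow> 'a \<Rightarrow> real" where
  "reversed_joint P j i = matrix_inv (condAB P) $ j $ i * margA P i"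

lemma sum_reversed_joint_over_B:
  assumes "\<forall>j. margB P j \<noteq> 0" and "invertible (condAB P)"
  shows "(\<Sum>j\<in>UNIV. reversed_joint P j i) = margA P i"
proof -
  have "(\<Sum>j\<in>UNIV. matrix_inv (condAB P) $ j $ i) = 1"
    using assms
    by (auto intro: column_sums_right_inverse[OF column_sum_condAB invertible_matrix_inv(1)])
  then show ?thesis
    by (simp add: reversed_joint_def flip: sum_distrib_right)
qed

lemma sum_reversed_joint_over_A:
  assumes "\<forall>j. margB P j \<noteq> 0" and "invertible (condAB P)"
  shows "(\<Sum>i\<in>UNIV. reversed_joint P j i) = margB P j"
proof -
  have "matrix_inv (condAB P) *v (\<chi> i. margA P i) = (\<chi> j. margB P j)"
    using assms invertible_matrix_inv(2)[OF assms(2)]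
    by (simp add: condAB_mult_margB[symmetric] matrix_vector_mul_assoc)
  then show ?thesis
    by (simp add: reversed_joint_def matrix_vector_mult_def vec_eq_iff)
qed

lemma condBA_reversed_joint:
  assumes "\<forall>i. margA P i \<noteq> 0" and "\<forall>j. margB P j \<noteq> 0" and "invertible (condAB P)"
  shows "condBA (reversed_joint P) = matrix_inv (condAB P)"
  using assms by (simp add: vec_eq_iff condBA_def sum_reversed_joint_over_B)
    (simp add: reversed_joint_def)

lemma gen_assignment_reversed_joint:
  assumes "(\<Sum>i\<in>UNIV. \<Sum>j\<in>UNIV. P i j) = 1"
    and "\<forall>j. margB P j \<noteq> 0" and "invertible (condAB P)"
  shows "gen_assignment P (reversed_joint P)"
  using assms
  by (simp add: gen_assignment_def sum_reversed_joint_over_A sum_reversed_joint_over_B)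
    (simp add: margA_def margB_def)

lemma axiom5_reversed_joint:
  assumes "\<forall>i. margA P i \<noteq> 0" and "\<forall>j. margB P j \<noteq> 0" and "invertible (condAB P)"
  shows "axiom5 P (reversed_joint P)"
  using invertible_matrix_inv[OF assms(3)]
  by (simp add: axiom5_def condBA_reversed_joint[OF assms] matrix_vector_mul_assoc)

theorem corollary1:
  fixes PK :: "'a::finite \<Rightarrow> 'b::finite \<Rightarrow> real"
  assumes "kolmogorov PK"
    and "\<not> product_dist PK"
    and "\<forall>i. margA PK i \<noteq> 0"
    and "\<forall>j. margB PK j \<noteq> 0"
    and "invertible (condAB PK)"
  shows "\<exists>(PIab :: 'a \<Rightarrow> 'b \<Rightarrow> real) (PIba :: 'b \<Rightarrow> 'a \<Rightarrow> real).
           gen_assignment PIab PIba \<and> axiom5 PIab PIba \<and> (\<forall>i j. PK i j = PIab i j)"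
proof (intro exI conjI)
  show "gen_assignment PK (reversed_joint PK)"
    using assms(1,4,5) by (intro gen_assignment_reversed_joint) (simp_all add: kolmogorov_def)
  show "axiom5 PK (reversed_joint PK)"
    using assms(3-5) by (rule axiom5_reversed_joint)
qed simp

end
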